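(* Let $\Omega\subseteq\mathbb{C}$ be a domain, $F:\Omega\to B(\mathfrak{X})$ a function, $\mathcal{H}=\mathcal{H}_F$ the associated reproducing kernel Hilbert space, $\{u_n\}_{n\ge1}$ an orthonormal basis of $\mathfrak{X}$, and $F_n(z)=F(z)u_n$ for $z\in\Omega$. Then every element of $\mathcal{H}$ is an $\mathfrak{X}$-valued analytic function on $\Omega$ if and only if each $F_n$ is analytic on $\Omega$ and $z\mapsto\|F(z)\|$ is bounded on every compact subset of $\Omega$.
   Context: $\mathfrak{X}$ is a complex separable Hilbert space. $\mathcal{H}_F=\{f_u: u\in\mathfrak{X}\}$ with $f_u(z)=F(z)u$, normed by $\|f_u\|=\inf\{\|w\|_{\mathfrak{X}}: F(\cdot)w=f_u\}$. *)

theory Defs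
  imports "HOL-Analysis.Analysis"
begin

text \<open>HOL-Analysis only provides real inner product spaces, so a complex
Hilbert space is introduced here as a type class: a real Banach space with a
compatible complex scalar multiplication and a sesquilinear inner product
(linear in the second argument) that induces the norm.\<close>

class cvector = real_vector +
  fixes scaleC :: "complex \<Rightarrow> 'a \<Rightarrow> 'a"
  assumes scaleC_add_right: "scaleC a (x + y) = scaleC a x + scaleC a y"
    and scaleC_add_left: "scaleC (a + b) x = scaleC a x + scaleC b x"
    and scaleC_scaleC: "scaleC a (scaleC b x) = scaleC (a * b) x"
    and scaleC_one: "scaleC 1 x = x"
    and scaleR_scaleC: "scaleR r x = scaleC (complex_of_real r) x"

class chilbert = cvector + banach +
  fixes cinner :: "'a \<Rightarrow> 'a \<Rightarrow> complex"
  assumes cinner_commute: "cinner x y = cnj (cinner y x)"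
    and cinner_add_right: "cinner x (y + z) = cinner x y + cinner x z"
    and cinner_scaleC_right: "cinner x (scaleC c y) = c * cinner x y"
    and cinner_self_norm: "cinner x x = complex_of_real ((norm x)\<^sup>2)"

definition bounded_clinear :: "('a::{cvector,real_normed_vector} \<Rightarrow> 'b::{cvector,real_normed_vector}) \<Rightarrow> bool" where
  "bounded_clinear T \<longleftrightarrow>
     (\<forall>x y. T (x + y) = T x + T y) \<and>
     (\<forall>c x. T (scaleC c x) = scaleC c (T x)) \<and>
     (\<exists>K. \<forall>x. norm (T x) \<le> norm x * K)"

definition orthonormal_basis :: "(nat \<Rightarrow> 'a::chilbert) \<Rightarrow> bool" where
  "orthonormal_basis u \<longleftrightarrow>
     (\<forall>m n. cinner (u m) (u n) = (if m = n then 1 else 0)) \<and>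
     (\<forall>x. (\<forall>n. cinner (u n) x = 0) \<longrightarrow> x = 0)"

definition vanalytic_on :: "(complex \<Rightarrow> 'a::{cvector,real_normed_vector}) \<Rightarrow> complex set \<Rightarrow> bool" where
  "vanalytic_on f S \<longleftrightarrow>
     (\<forall>z\<in>S. \<exists>d. ((\<lambda>w. scaleC (inverse (w - z)) (f w - f z)) \<longlongrightarrow> d) (at z))"

definition H_F :: "(complex \<Rightarrow> 'a \<Rightarrow> 'a) \<Rightarrow> (complex \<Rightarrow> 'a) set" where
  "H_F F = {f. \<exists>u. f = (\<lambda>z. F z u)}"

end

theory Submission imports Defs "HOL-Complex_Analysis.Complex_Analysis" begin

text \<open>The proof rests on a weak-to-strong analyticity principle: a
Hilbert-space-valued function that is locally bounded and whose scalar components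
\<open>z \<mapsto> \<langle>v, f z\<rangle>\<close> are all holomorphic is itself analytic, because the Cauchy
estimates for the scalar components are uniform in \<open>\<parallel>v\<parallel> \<le> 1\<close> and force the
difference quotients to form a Cauchy net. If each \<open>F_n\<close> is analytic and
\<open>\<parallel>F(z)\<parallel>\<close> is locally bounded, then \<open>\<langle>v, F(z) u\<rangle>\<close> is a locally uniform limit
of the holomorphic functions \<open>\<Sum>\<^sub>n\<^sub><\<^sub>N \<langle>u_n, u\<rangle> \<langle>v, F_n(z)\<rangle>\<close>, so every \<open>f_u\<close>
is analytic. Conversely, analytic functions are continuous, hence the family
\<open>F(z)\<close>, \<open>z \<in> K\<close>, is pointwise bounded on each compact \<open>K\<close>, and the uniform
boundedness principle bounds \<open>\<parallel>F(z)\<parallel>\<close> on \<open>K\<close>.\<close>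

lemma mult_cnj_eq_norm_square: "z * cnj z = (complex_of_real (cmod z))\<^sup>2"
  by (metis complex_norm_square of_real_power)

context chilbert begin

lemma cinner_zero_right [simp]: "cinner x 0 = 0"
  using cinner_add_right[of x 0 0] by simp

lemma cinner_zero_left [simp]: "cinner 0 x = 0"
  by (subst cinner_commute) simp

lemma cinner_diff_right: "cinner x (y - z) = cinner x y - cinner x z"
  using cinner_add_right[of x "y - z" z] by (simp add: algebra_simps)

lemma cinner_add_left: "cinner (x + y) z = cinner x z + cinner y z"
  by (metis cinner_commute cinner_add_right complex_cnj_add)

lemma cinner_diff_left: "cinner (x - y) z = cinner x z - cinner y z"
  by (metis cinner_commute cinner_diff_right complex_cnj_diff)

lemma cinner_scaleC_left: "cinner (scaleC c x) y = cnj c * cinner x y"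
  by (metis cinner_commute cinner_scaleC_right complex_cnj_cnj complex_cnj_mult)

lemma cinner_sum_right: "cinner x (sum f A) = (\<Sum>a\<in>A. cinner x (f a))"
  by (induction A rule: infinite_finite_induct) (auto simp: cinner_add_right)

lemma cinner_sum_left: "cinner (sum f A) x = (\<Sum>a\<in>A. cinner (f a) x)"
  by (induction A rule: infinite_finite_induct) (auto simp: cinner_add_left)

lemma norm_scaleC: "norm (scaleC c x) = cmod c * norm x"
proof -
  have "cinner (scaleC c x) (scaleC c x) = cnj c * c * cinner x x"
    by (simp add: cinner_scaleC_left cinner_scaleC_right)
  also have "cnj c * c = complex_of_real ((cmod c)\<^sup>2)"
    by (metis complex_norm_square mult.commute)
  finally have "(norm (scaleC c x))\<^sup>2 = (cmod c * norm x)\<^sup>2"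
    unfolding cinner_self_norm of_real_mult[symmetric] of_real_eq_iff power_mult_distrib .
  then show ?thesis
    by (rule power2_eq_imp_eq) simp_all
qed

lemma Cauchy_Schwarz_cinner: "cmod (cinner x y) \<le> norm x * norm y"
proof (cases "x = 0")
  case True
  then show ?thesis by simp
next
  case False
  define N where "N = (norm x)\<^sup>2"
  define a where "a = cinner x y"
  have N: "N > 0" using False by (simp add: N_def)
  \<comment> \<open>Expand \<open>\<parallel>y - (a/N) x\<parallel>\<^sup>2 \<ge> 0\<close>.\<close>
  define t where "t = a / of_real N"
  have yx: "cinner y x = cnj a" by (simp add: a_def cinner_commute[of y x])
  have xx: "cinner x x = of_real N" by (simp add: N_def cinner_self_norm)
  have "cinner (y - scaleC t x) (y - scaleC t x)
      = cinner y y - t * cinner y x - cnj t * cinner x y + cnj t * t * cinner x x"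
    by (simp add: cinner_diff_left cinner_diff_right cinner_scaleC_left cinner_scaleC_right algebra_simps)
  also have "\<dots> = of_real ((norm y)\<^sup>2 - (cmod a)\<^sup>2 / N)"
    using N unfolding yx xx a_def[symmetric] t_def
    by (simp add: cinner_self_norm field_simps flip: mult_cnj_eq_norm_square)
  finally have "(norm (y - scaleC t x))\<^sup>2 = (norm y)\<^sup>2 - (cmod a)\<^sup>2 / N"
    unfolding cinner_self_norm of_real_eq_iff .
  then have "(cmod a)\<^sup>2 \<le> (norm x * norm y)\<^sup>2"
    using N zero_le_power2[of "norm (y - scaleC t x)"]
    by (simp add: N_def pos_divide_le_eq power_mult_distrib mult.commute)
  then show ?thesis
    unfolding a_def by (rule power2_le_imp_le) simp
qed

end

lemma tendsto_cinner_right: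
  fixes g :: "'b \<Rightarrow> 'a::chilbert"
  assumes "(g \<longlongrightarrow> l) F"
  shows "((\<lambda>x. cinner v (g x)) \<longlongrightarrow> cinner v l) F"
proof -
  have "bounded_linear (cinner v :: 'a \<Rightarrow> complex)"
  proof (rule bounded_linear_intro[where K="norm v"])
    show "cinner v (x + y) = cinner v x + cinner v y" for x y
      by (rule cinner_add_right)
    show "cinner v (scaleR r x) = scaleR r (cinner v x)" for r x
      by (simp add: scaleR_scaleC cinner_scaleC_right scaleR_conv_of_real)
    show "norm (cinner v x) \<le> norm x * norm v" for x
      using Cauchy_Schwarz_cinner[of v x] by (simp add: mult.commute)
  qed
  from bounded_linear.tendsto[OF this assms] show ?thesis .
qed

lemma bounded_clinear_imp_bounded_linear:
  fixes T :: "'a::{cvector,real_normed_vector} \<Rightarrow> 'b::{cvector,real_normed_vector}"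
  assumes "bounded_clinear T"
  shows "bounded_linear T"
proof -
  obtain K where "\<And>x. norm (T x) \<le> norm x * K"
    using assms by (auto simp: bounded_clinear_def)
  then show ?thesis
    using assms by (intro bounded_linear_intro[where K=K]) (simp_all add: bounded_clinear_def scaleR_scaleC)
qed

lemma bounded_clinear_scaleC:
  "bounded_clinear T \<Longrightarrow> T (scaleC c x) = scaleC c (T x)"
  by (simp add: bounded_clinear_def)

lemma bounded_clinear_sum:
  fixes T :: "'a::{cvector,real_normed_vector} \<Rightarrow> 'b::{cvector,real_normed_vector}"
  assumes "bounded_clinear T"
  shows "T (sum f A) = (\<Sum>a\<in>A. T (f a))"
  using linear_sum[OF bounded_linear.linear[OF bounded_clinear_imp_bounded_linear[OF assms]]] by simp

lemma bounded_clinear_diff: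
  fixes T :: "'a::{cvector,real_normed_vector} \<Rightarrow> 'b::{cvector,real_normed_vector}"
  assumes "bounded_clinear T"
  shows "T (x - y) = T x - T y"
  using linear_diff[OF bounded_linear.linear[OF bounded_clinear_imp_bounded_linear[OF assms]]] by simp

lemma bounded_clinear_norm_le:
  fixes T :: "'a::{cvector,real_normed_vector} \<Rightarrow> 'b::{cvector,real_normed_vector}"
  assumes "bounded_clinear T" and "onorm T \<le> M"
  shows "norm (T x) \<le> M * norm x"
  using onorm[OF bounded_clinear_imp_bounded_linear[OF assms(1)], of x] assms(2)
  by (meson mult_right_mono norm_ge_zero order_trans)

lemma onorm_le_of_bounded_on_ball:
  fixes T :: "'a::real_normed_vector \<Rightarrow> 'b::real_normed_vector"
  assumes lin: "bounded_linear T" and r: "r > 0"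
    and bnd: "\<And>x. x \<in> ball x0 r \<Longrightarrow> norm (T x) \<le> m"
  shows "onorm T \<le> 4 * m / r"
proof (rule onorm_bound)
  have "0 \<le> m"
    using bnd[of x0] r by (meson centre_in_ball norm_ge_zero order_trans)
  then show "0 \<le> 4 * m / r"
    using r by simp
  fix x :: 'a
  show "norm (T x) \<le> 4 * m / r * norm x"
  proof (cases "x = 0")
    case True
    then show ?thesis using linear_0[OF bounded_linear.linear[OF lin]] by simp
  next
    case False
    define c where "c = r / (2 * norm x)"
    have c: "c > 0" using False r by (simp add: c_def)
    have "norm (scaleR c x) < r" using False r by (simp add: c_def)
    then have "norm (T (x0 + scaleR c x)) \<le> m" "norm (T x0) \<le> m"
      using r by (auto intro!: bnd simp: dist_norm)
    moreover have "c * norm (T x) = norm (T (x0 + scaleR c x) - T x0)"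
      using c linear_add[OF bounded_linear.linear[OF lin]]
        linear_scale[OF bounded_linear.linear[OF lin], of c x] by simp
    ultimately have "c * norm (T x) \<le> 2 * m"
      using norm_triangle_ineq4[of "T (x0 + scaleR c x)" "T x0"] by linarith
    then have "norm (T x) \<le> 2 * m / c" using c by (simp add: field_simps)
    also have "\<dots> = 4 * m / r * norm x" using False r by (simp add: c_def field_simps)
    finally show ?thesis .
  qed
qed

theorem uniform_boundedness:
  fixes T :: "'i \<Rightarrow> 'a::banach \<Rightarrow> 'b::real_normed_vector"
  assumes lin: "\<And>i. i \<in> I \<Longrightarrow> bounded_linear (T i)"
    and pointwise: "\<And>x. \<exists>B. \<forall>i\<in>I. norm (T i x) \<le> B"
  shows "\<exists>M. \<forall>i\<in>I. onorm (T i) \<le> M"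
proof -
  define E where "E m = {x. \<forall>i\<in>I. norm (T i x) \<le> real m}" for m :: nat
  have closed_E: "closed (E m)" for m
  proof -
    have "closed {x. norm (T i x) \<le> real m}" if "i \<in> I" for i
      using linear_continuous_on[OF lin[OF that]] by (intro closed_Collect_le continuous_intros) auto
    moreover have "E m = (\<Inter>i\<in>I. {x. norm (T i x) \<le> real m})" by (auto simp: E_def)
    ultimately show ?thesis by auto
  qed
  have "\<Union>(range E) = UNIV"
  proof -
    have "x \<in> \<Union>(range E)" for x
    proof -
      obtain B where "\<forall>i\<in>I. norm (T i x) \<le> B" using pointwise by blast
      moreover obtain m :: nat where "B \<le> real m" using real_arch_simple by blast
      ultimately have "x \<in> E m" unfolding E_def by force
      then show ?thesis by blast
    qed
    then show ?thesis by blast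
  qed
  then have "\<exists>m. interior (E m) \<noteq> {}"
  proof (rule contrapos_pp)
    assume "\<not> (\<exists>m. interior (E m) \<noteq> {})"
    then have "euclidean interior_of \<Union>(range E) = {}"
      by (intro Baire_category_alt) (use completely_metrizable_space_euclidean closed_E in auto)
    then show "\<Union>(range E) \<noteq> UNIV" by auto
  qed
  then obtain m x0 r where "r > 0" "ball x0 r \<subseteq> E m"
    by (metis all_not_in_conv interior_subset open_contains_ball_eq open_interior subset_trans)
  then have "onorm (T i) \<le> 4 * real m / r" if "i \<in> I" for i
    using that by (intro onorm_le_of_bounded_on_ball[OF lin]) (auto simp: E_def)
  then show ?thesis by blast
qed

lemma norm_sum_orthonormal:
  fixes u :: "nat \<Rightarrow> 'a::chilbert"
  assumes orth: "\<And>m n. cinner (u m) (u n) = (if m = n then 1 else 0)" and "finite A"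
  shows "(norm (\<Sum>n\<in>A. scaleC (c n) (u n)))\<^sup>2 = (\<Sum>n\<in>A. (cmod (c n))\<^sup>2)"
proof -
  have "cinner (\<Sum>n\<in>A. scaleC (c n) (u n)) (\<Sum>n\<in>A. scaleC (c n) (u n))
      = of_real (\<Sum>n\<in>A. (cmod (c n))\<^sup>2)"
    using \<open>finite A\<close> by (simp add: cinner_sum_left cinner_sum_right cinner_scaleC_left
        cinner_scaleC_right orth if_distrib mult_cnj_eq_norm_square cong: if_cong)
  then show ?thesis
    unfolding cinner_self_norm of_real_eq_iff .
qed

lemma summable_norm_cinner_orthonormal:
  fixes u :: "nat \<Rightarrow> 'a::chilbert"
  assumes orth: "\<And>m n. cinner (u m) (u n) = (if m = n then 1 else 0)"
  shows "summable (\<lambda>n. (cmod (cinner (u n) x))\<^sup>2)"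
proof (rule summableI_nonneg_bounded)
  fix N
  define s where "s = (\<Sum>n<N. scaleC (cinner (u n) x) (u n))"
  define G where "G = (\<Sum>n<N. (cmod (cinner (u n) x))\<^sup>2)"
  have ss: "cinner s s = of_real G"
    using norm_sum_orthonormal[OF orth, of "{..<N}"] by (simp add: cinner_self_norm s_def G_def)
  have sx: "cinner s x = of_real G"
    by (simp add: s_def G_def cinner_sum_left cinner_scaleC_left mult.commute mult_cnj_eq_norm_square)
  then have xs: "cinner x s = of_real G"
    by (metis cinner_commute complex_cnj_complex_of_real)
  have "cinner (x - s) (x - s) = cinner x x - of_real G"
    by (simp add: cinner_diff_left cinner_diff_right ss sx xs)
  then have "(norm (x - s))\<^sup>2 = (norm x)\<^sup>2 - G"
    unfolding cinner_self_norm of_real_diff[symmetric] of_real_eq_iff .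
  then show "sum (\<lambda>n. (cmod (cinner (u n) x))\<^sup>2) {..<N} \<le> (norm x)\<^sup>2"
    unfolding G_def[symmetric] using zero_le_power2[of "norm (x - s)"] by linarith
qed simp

lemma summable_orthonormal_series:
  fixes u :: "nat \<Rightarrow> 'a::chilbert"
  assumes orth: "\<And>m n. cinner (u m) (u n) = (if m = n then 1 else 0)"
    and sq: "summable (\<lambda>n. (cmod (c n))\<^sup>2)"
  shows "summable (\<lambda>n. scaleC (c n) (u n))"
  unfolding summable_Cauchy
proof (intro allI impI)
  fix e :: real
  assume "e > 0"
  then obtain N where N: "\<And>m n. m \<ge> N \<Longrightarrow> norm (\<Sum>k\<in>{m..<n}. (cmod (c k))\<^sup>2) < e\<^sup>2"
    using sq unfolding summable_Cauchy by (meson zero_less_power)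
  have "norm (\<Sum>k\<in>{m..<n}. scaleC (c k) (u k)) < e" if "m \<ge> N" for m n
  proof -
    have "(norm (\<Sum>k\<in>{m..<n}. scaleC (c k) (u k)))\<^sup>2 < e\<^sup>2"
      using N[OF that, of n] norm_sum_orthonormal[OF orth, of "{m..<n}" c] by simp
    then show ?thesis
      using \<open>e > 0\<close> by (meson power_less_imp_less_base less_imp_le)
  qed
  then show "\<exists>N. \<forall>m\<ge>N. \<forall>n. norm (\<Sum>k\<in>{m..<n}. scaleC (c k) (u k)) < e"
    by blast
qed

lemma orthonormal_basis_sums:
  fixes u :: "nat \<Rightarrow> 'a::chilbert"
  assumes onb: "orthonormal_basis u"
  shows "(\<lambda>n. scaleC (cinner (u n) x) (u n)) sums x"
proof -
  have orth: "\<And>m n. cinner (u m) (u n) = (if m = n then 1 else 0)"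
    using onb by (simp add: orthonormal_basis_def)
  obtain L where L: "(\<lambda>n. scaleC (cinner (u n) x) (u n)) sums L"
    using summable_orthonormal_series[OF orth summable_norm_cinner_orthonormal[OF orth]]
    by (auto simp: summable_def)
  have "cinner (u k) L = cinner (u k) x" for k
  proof -
    have "(\<lambda>N. cinner (u k) (\<Sum>n<N. scaleC (cinner (u n) x) (u n))) \<longlonglongrightarrow> cinner (u k) L"
      using tendsto_cinner_right L unfolding sums_def by blast
    moreover have "\<forall>\<^sub>F N in sequentially.
        cinner (u k) (\<Sum>n<N. scaleC (cinner (u n) x) (u n)) = cinner (u k) x"
      using eventually_gt_at_top[of k]
      by eventually_elim (simp add: cinner_sum_right cinner_scaleC_right orth if_distrib cong: if_cong)
    ultimately have "(\<lambda>N. cinner (u k) x) \<longlonglongrightarrow> cinner (u k) L"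
      by (rule Lim_transform_eventually)
    then show ?thesis
      by (simp add: LIMSEQ_const_iff)
  qed
  then have "x - L = 0"
    using onb unfolding orthonormal_basis_def by (metis cinner_diff_right diff_self)
  then show ?thesis
    using L by simp
qed

lemma vanalytic_on_imp_continuous_on:
  fixes f :: "complex \<Rightarrow> 'a::chilbert"
  assumes "vanalytic_on f S"
  shows "continuous_on S f"
proof (rule continuous_at_imp_continuous_on, intro ballI)
  fix z
  assume "z \<in> S"
  then obtain d where d: "((\<lambda>w. scaleC (inverse (w - z)) (f w - f z)) \<longlongrightarrow> d) (at z)"
    using assms by (auto simp: vanalytic_on_def)
  have "((\<lambda>w. f w - f z) \<longlongrightarrow> 0) (at z)"
  proof (rule Lim_null_comparison)
    have "norm (f w - f z) = cmod (w - z) * norm (scaleC (inverse (w - z)) (f w - f z))"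
      if "w \<noteq> z" for w
      using that by (simp add: norm_scaleC norm_inverse)
    then show "\<forall>\<^sub>F w in at z. norm (f w - f z) \<le> cmod (w - z) * norm (scaleC (inverse (w - z)) (f w - f z))"
      by (auto simp: eventually_at_filter)
    have "((\<lambda>w. cmod (w - z) * norm (scaleC (inverse (w - z)) (f w - f z)))
        \<longlongrightarrow> cmod (z - z) * norm d) (at z)"
      by (intro tendsto_intros d)
    then show "((\<lambda>w. cmod (w - z) * norm (scaleC (inverse (w - z)) (f w - f z))) \<longlongrightarrow> 0) (at z)"
      by simp
  qed
  then show "isCont f z"
    by (simp add: isCont_def LIM_zero_iff)
qed

lemma vanalytic_on_imp_holomorphic_cinner:
  fixes f :: "complex \<Rightarrow> 'a::chilbert"
  assumes "vanalytic_on f S"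
  shows "(\<lambda>z. cinner v (f z)) holomorphic_on S"
  unfolding holomorphic_on_def
proof
  fix z
  assume "z \<in> S"
  then obtain d where "((\<lambda>w. scaleC (inverse (w - z)) (f w - f z)) \<longlongrightarrow> d) (at z)"
    using assms by (auto simp: vanalytic_on_def)
  from tendsto_cinner_right[OF this, of v]
  have "((\<lambda>w. (cinner v (f w) - cinner v (f z)) / (w - z)) \<longlongrightarrow> cinner v d) (at z)"
    by (simp add: cinner_scaleC_right cinner_diff_right divide_inverse mult.commute)
  then have "((\<lambda>z. cinner v (f z)) has_field_derivative cinner v d) (at z)"
    by (simp add: has_field_derivative_iff)
  then show "(\<lambda>z. cinner v (f z)) field_differentiable at z within S"
    using field_differentiable_at_within field_differentiable_def by blast
qed

lemma norm_holomorphic_first_order_remainder_le: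
  fixes h :: "complex \<Rightarrow> complex"
  assumes holo: "h holomorphic_on ball z0 R" and cont: "continuous_on (cball z0 R) h"
    and R: "R > 0" and bnd: "\<And>z. z \<in> cball z0 R \<Longrightarrow> cmod (h z) \<le> B"
    and w: "cmod (w - z0) \<le> R / 2"
  shows "cmod (h w - h z0 - deriv h z0 * (w - z0)) \<le> 2 * B * (cmod (w - z0) / R)\<^sup>2"
proof -
  \<comment> \<open>Cauchy's inequality bounds the Taylor coefficients by \<open>B / R\<^sup>n\<close>, so the
      terms of order \<open>\<ge> 2\<close> are dominated by \<open>B t\<^sup>2 t\<^sup>n\<close> with \<open>t = |w - z0| / R \<le> 1/2\<close>.\<close>
  define a where "a n = (deriv ^^ n) h z0 / fact n" for n
  define d where "d = w - z0"
  define t where "t = cmod d / R"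
  have t: "0 \<le> t" "t \<le> 1/2"
    using w R by (auto simp: t_def d_def field_simps)
  have "0 \<le> B"
    using bnd[of z0] R by (meson centre_in_cball less_imp_le norm_ge_zero order_trans)
  have a_le: "cmod (a n) \<le> B / R ^ n" for n
  proof -
    have "cmod ((deriv ^^ n) h z0) \<le> fact n * B / R ^ n"
      by (rule Cauchy_inequality[OF holo cont R]) (auto intro!: bnd simp: dist_norm)
    then show ?thesis
      by (simp add: a_def norm_divide field_simps)
  qed
  have "w \<in> ball z0 R"
    using w R by (simp add: dist_norm norm_minus_commute)
  from holomorphic_power_series[OF holo this]
  have "(\<lambda>n. a n * d ^ n) sums h w"
    by (simp add: a_def d_def)
  then have tail: "(\<lambda>n. a (n + 2) * d ^ (n + 2)) sums (h w - h z0 - deriv h z0 * d)"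
    using sums_iff_shift[of "\<lambda>n. a n * d ^ n" 2 "h w - h z0 - deriv h z0 * d"]
    by (simp add: a_def numeral_2_eq_2 algebra_simps)
  have geo: "(\<lambda>n. B * t\<^sup>2 * t ^ n) sums (B * t\<^sup>2 * (1 / (1 - t)))"
    using t by (intro sums_mult geometric_sums) simp
  have term_le: "cmod (a (n + 2) * d ^ (n + 2)) \<le> B * t\<^sup>2 * t ^ n" for n
  proof -
    have "cmod (a (n + 2) * d ^ (n + 2)) \<le> B / R ^ (n + 2) * cmod d ^ (n + 2)"
      unfolding norm_mult norm_power by (intro mult_right_mono a_le) simp
    also have "\<dots> = B * t\<^sup>2 * t ^ n"
      using R by (simp add: t_def power_divide power_add power2_eq_square)
    finally show ?thesis .
  qed
  have "cmod (h w - h z0 - deriv h z0 * d) \<le> B * t\<^sup>2 * (1 / (1 - t))"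
    using norm_suminf_le[OF term_le sums_summable[OF geo]] tail geo by (simp add: sums_iff)
  also have "\<dots> \<le> B * t\<^sup>2 * 2"
    using t \<open>0 \<le> B\<close> by (intro mult_left_mono) (auto simp: field_simps)
  finally show ?thesis
    by (simp add: t_def d_def)
qed

lemma norm_difference_quotient_minus_deriv_le:
  fixes h :: "complex \<Rightarrow> complex"
  assumes "h holomorphic_on ball z0 R" and "continuous_on (cball z0 R) h"
    and R: "R > 0" and "\<And>z. z \<in> cball z0 R \<Longrightarrow> cmod (h z) \<le> B"
    and w: "w \<noteq> z0" "cmod (w - z0) \<le> R / 2"
  shows "cmod ((h w - h z0) / (w - z0) - deriv h z0) \<le> 2 * B * cmod (w - z0) / R\<^sup>2"
proof -
  have "(h w - h z0) / (w - z0) - deriv h z0 = (h w - h z0 - deriv h z0 * (w - z0)) / (w - z0)"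
    using w by (simp add: field_simps)
  then have "cmod ((h w - h z0) / (w - z0) - deriv h z0)
      = cmod (h w - h z0 - deriv h z0 * (w - z0)) / cmod (w - z0)"
    by (simp add: norm_divide)
  also have "\<dots> \<le> 2 * B * (cmod (w - z0) / R)\<^sup>2 / cmod (w - z0)"
    using norm_holomorphic_first_order_remainder_le[OF assms(1-4) w(2)]
    by (simp add: divide_right_mono)
  also have "\<dots> = 2 * B * cmod (w - z0) / R\<^sup>2"
    using w R by (simp add: power2_eq_square field_simps)
  finally show ?thesis .
qed

lemma norm_diff_difference_quotients_le:
  fixes f :: "complex \<Rightarrow> 'a::chilbert"
  assumes hol: "\<And>v. (\<lambda>z. cinner v (f z)) holomorphic_on S"
    and R: "R > 0" "cball z0 R \<subseteq> S"
    and bnd: "\<And>z. z \<in> cball z0 R \<Longrightarrow> norm (f z) \<le> B"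
    and w: "w \<noteq> z0" "cmod (w - z0) \<le> R / 2"
    and w': "w' \<noteq> z0" "cmod (w' - z0) \<le> R / 2"
  defines "D \<equiv> \<lambda>w. scaleC (inverse (w - z0)) (f w - f z0)"
  shows "norm (D w - D w') \<le> 2 * B / R\<^sup>2 * (cmod (w - z0) + cmod (w' - z0))"
proof -
  define v where "v = D w - D w'"
  define h where "h = (\<lambda>z. cinner v (f z))"
  have h_cball: "h holomorphic_on cball z0 R"
    using holomorphic_on_subset[OF hol[of v] R(2)] by (simp add: h_def)
  then have h_hol: "h holomorphic_on ball z0 R" and h_cont: "continuous_on (cball z0 R) h"
    by (auto intro: holomorphic_on_subset[OF _ ball_subset_cball] holomorphic_on_imp_continuous_on)
  have h_bnd: "cmod (h z) \<le> norm v * B" if "z \<in> cball z0 R" for z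
    using Cauchy_Schwarz_cinner[of v "f z"] mult_left_mono[OF bnd[OF that], of "norm v"]
    unfolding h_def by simp
  \<comment> \<open>Both quotients are within \<open>O(\<parallel>v\<parallel>)\<close> of the same scalar derivative, so \<open>\<parallel>v\<parallel>\<^sup>2 = \<langle>v, v\<rangle>\<close> is \<open>O(\<parallel>v\<parallel>)\<close>.\<close>
  define q where "q w = (h w - h z0) / (w - z0) - deriv h z0" for w
  have q_le: "cmod (q x) \<le> 2 * (norm v * B) * cmod (x - z0) / R\<^sup>2"
    if "x \<noteq> z0" "cmod (x - z0) \<le> R / 2" for x
    unfolding q_def using h_hol h_cont R(1) h_bnd that
    by (rule norm_difference_quotient_minus_deriv_le)
  have Dq: "cinner v (D x) = (h x - h z0) / (x - z0)" for x
    by (simp add: D_def h_def cinner_scaleC_right cinner_diff_right divide_inverse mult.commute)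
  have "cinner v v = q w - q w'"
    using cinner_diff_right[of v "D w" "D w'"] by (simp add: Dq q_def flip: v_def)
  then have "(norm v)\<^sup>2 \<le> cmod (q w) + cmod (q w')"
    by (metis cinner_self_norm norm_of_real abs_power2 norm_triangle_ineq4)
  also have "\<dots> \<le> norm v * (2 * B / R\<^sup>2 * (cmod (w - z0) + cmod (w' - z0)))"
    using add_mono[OF q_le[OF w] q_le[OF w']] by (simp add: field_simps add_divide_distrib)
  finally have "norm v * norm v \<le> norm v * (2 * B / R\<^sup>2 * (cmod (w - z0) + cmod (w' - z0)))"
    by (simp add: power2_eq_square)
  moreover have "0 \<le> B"
    using bnd[of z0] R(1) by (meson centre_in_cball less_imp_le norm_ge_zero order_trans)
  then have "0 \<le> 2 * B / R\<^sup>2 * (cmod (w - z0) + cmod (w' - z0))"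
    by simp
  ultimately show ?thesis
    unfolding v_def[symmetric] by (metis mult_le_cancel_left_pos norm_zero zero_less_norm_iff)
qed

lemma tendsto_at_exists_if_dist_le:
  fixes D :: "'a::{real_normed_vector,perfect_space} \<Rightarrow> 'b::banach"
  assumes "r > 0" and "0 \<le> C"
    and dist_le: "\<And>w w'. w \<noteq> z0 \<Longrightarrow> norm (w - z0) < r \<Longrightarrow> w' \<noteq> z0 \<Longrightarrow> norm (w' - z0) < r \<Longrightarrow>
      dist (D w) (D w') \<le> C * (norm (w - z0) + norm (w' - z0))"
  shows "\<exists>d. (D \<longlongrightarrow> d) (at z0)"
proof -
  have "cauchy_filter (filtermap D (at z0))"
    unfolding cauchy_filter_metric_filtermap
  proof (intro allI impI)
    fix e :: real
    assume "e > 0"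
    define \<delta> where "\<delta> = min r (e / (2 * C + 1))"
    have "\<delta> > 0"
      using \<open>r > 0\<close> \<open>0 \<le> C\<close> \<open>e > 0\<close> by (simp add: \<delta>_def)
    have "2 * C * \<delta> \<le> 2 * C * (e / (2 * C + 1))"
      using \<open>0 \<le> C\<close> by (intro mult_left_mono) (simp_all add: \<delta>_def)
    also have "\<dots> < e"
      using \<open>0 \<le> C\<close> \<open>e > 0\<close> by (simp add: field_simps add_pos_nonneg)
    finally have C\<delta>: "2 * C * \<delta> < e" .
    have "dist (D w) (D w') < e"
      if "w \<noteq> z0" "norm (w - z0) < \<delta>" "w' \<noteq> z0" "norm (w' - z0) < \<delta>" for w w'
    proof -
      have "dist (D w) (D w') \<le> C * (norm (w - z0) + norm (w' - z0))"
        using that by (intro dist_le) (auto simp: \<delta>_def)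
      also have "\<dots> \<le> 2 * C * \<delta>"
        using that \<open>0 \<le> C\<close> mult_left_mono[of "norm (w - z0) + norm (w' - z0)" "2 * \<delta>" C] by simp
      finally show ?thesis
        using C\<delta> by linarith
    qed
    moreover have "\<forall>\<^sub>F w in at z0. w \<noteq> z0 \<and> norm (w - z0) < \<delta>"
      using \<open>\<delta> > 0\<close> by (auto simp: eventually_at dist_norm)
    ultimately show "\<exists>P. eventually P (at z0) \<and> (\<forall>w w'. P w \<and> P w' \<longrightarrow> dist (D w) (D w') < e)"
      by blast
  qed
  moreover have "filtermap D (at z0) \<noteq> bot"
    by (simp add: filtermap_bot_iff)
  ultimately obtain d where "filtermap D (at z0) \<le> nhds d"
    using cauchy_filter_complete_converges[OF _ complete_UNIV] by auto
  then show ?thesis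
    unfolding filterlim_def by blast
qed

theorem weakly_holomorphic_imp_vanalytic:
  fixes f :: "complex \<Rightarrow> 'a::chilbert"
  assumes "open S"
    and hol: "\<And>v. (\<lambda>z. cinner v (f z)) holomorphic_on S"
    and bnd: "\<And>K. compact K \<Longrightarrow> K \<subseteq> S \<Longrightarrow> \<exists>B. \<forall>z\<in>K. norm (f z) \<le> B"
  shows "vanalytic_on f S"
  unfolding vanalytic_on_def
proof
  fix z0
  assume "z0 \<in> S"
  then obtain R where R: "R > 0" "cball z0 R \<subseteq> S"
    using \<open>open S\<close> open_contains_cball by blast
  then obtain B where B: "\<And>z. z \<in> cball z0 R \<Longrightarrow> norm (f z) \<le> B"
    using bnd[OF compact_cball R(2)] by blast
  have "0 \<le> B"
    using B[of z0] R(1) by (meson centre_in_cball less_imp_le norm_ge_zero order_trans)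
  show "\<exists>d. ((\<lambda>w. scaleC (inverse (w - z0)) (f w - f z0)) \<longlongrightarrow> d) (at z0)"
  proof (rule tendsto_at_exists_if_dist_le[where r="R / 2" and C="2 * B / R\<^sup>2"])
    show "dist (scaleC (inverse (w - z0)) (f w - f z0)) (scaleC (inverse (w' - z0)) (f w' - f z0))
        \<le> 2 * B / R\<^sup>2 * (norm (w - z0) + norm (w' - z0))"
      if "w \<noteq> z0" "norm (w - z0) < R / 2" "w' \<noteq> z0" "norm (w' - z0) < R / 2" for w w'
      unfolding dist_norm using that by (intro norm_diff_difference_quotients_le[OF hol R B]) auto
  qed (use R(1) \<open>0 \<le> B\<close> in auto)
qed

lemma uniform_limit_cinner_apply:
  fixes F :: "complex \<Rightarrow> 'x::chilbert \<Rightarrow> 'x"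
  assumes bcl: "\<And>z. z \<in> K \<Longrightarrow> bounded_clinear (F z)"
    and M: "\<And>z. z \<in> K \<Longrightarrow> onorm (F z) \<le> M" and "0 \<le> M"
    and "s \<longlonglongrightarrow> y"
  shows "uniform_limit K (\<lambda>N z. cinner v (F z (s N))) (\<lambda>z. cinner v (F z y)) sequentially"
proof (rule uniform_limitI)
  fix e :: real
  assume "e > 0"
  define A where "A = norm v * M + 1"
  have "A > 0"
    using \<open>0 \<le> M\<close> by (simp add: A_def add_nonneg_pos)
  then have "\<forall>\<^sub>F N in sequentially. norm (s N - y) < e / A"
    using \<open>s \<longlonglongrightarrow> y\<close> \<open>e > 0\<close> by (simp add: tendsto_iff dist_norm)
  then show "\<forall>\<^sub>F N in sequentially. \<forall>z\<in>K. dist (cinner v (F z (s N))) (cinner v (F z y)) < e"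
  proof eventually_elim
    case (elim N)
    show ?case
    proof
      fix z
      assume z: "z \<in> K"
      have "dist (cinner v (F z (s N))) (cinner v (F z y)) = cmod (cinner v (F z (s N - y)))"
        using bcl[OF z] by (simp add: dist_norm bounded_clinear_diff cinner_diff_right)
      also have "\<dots> \<le> norm v * (M * norm (s N - y))"
        using Cauchy_Schwarz_cinner bounded_clinear_norm_le[OF bcl[OF z] M[OF z]]
        by (meson mult_left_mono norm_ge_zero order_trans)
      also have "\<dots> \<le> A * norm (s N - y)"
        by (simp add: A_def algebra_simps)
      also have "\<dots> < e"
        using elim \<open>A > 0\<close> by (simp add: field_simps)
      finally show "dist (cinner v (F z (s N))) (cinner v (F z y)) < e" .
    qed
  qed
qed

lemma holomorphic_cinner_apply_of_basis:
  fixes F :: "complex \<Rightarrow> 'x::chilbert \<Rightarrow> 'x" and u :: "nat \<Rightarrow> 'x"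
  assumes "open S" and bcl: "\<And>z. z \<in> S \<Longrightarrow> bounded_clinear (F z)"
    and onb: "orthonormal_basis u"
    and hol: "\<And>n. (\<lambda>z. cinner v (F z (u n))) holomorphic_on S"
    and bnd: "\<And>K. compact K \<Longrightarrow> K \<subseteq> S \<Longrightarrow> \<exists>M. \<forall>z\<in>K. onorm (F z) \<le> M"
  shows "(\<lambda>z. cinner v (F z y)) holomorphic_on S"
  unfolding holomorphic_on_open[OF \<open>open S\<close>]
proof
  fix z0
  assume "z0 \<in> S"
  then obtain R where R: "R > 0" "cball z0 R \<subseteq> S"
    using \<open>open S\<close> open_contains_cball by blast
  then obtain M where M: "\<And>z. z \<in> cball z0 R \<Longrightarrow> onorm (F z) \<le> M"
    using bnd[OF compact_cball R(2)] by blast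
  have "0 \<le> M"
    using M[of z0] R onorm_pos_le[OF bounded_clinear_imp_bounded_linear[OF bcl[of z0]]]
    by (meson centre_in_cball less_imp_le order_trans subsetD)
  define s where "s = (\<lambda>N. \<Sum>n<N. scaleC (cinner (u n) y) (u n))"
  have "s \<longlonglongrightarrow> y"
    using orthonormal_basis_sums[OF onb, of y] by (simp add: sums_def s_def)
  have "(\<lambda>z. \<Sum>n<N. cinner (u n) y * cinner v (F z (u n))) holomorphic_on S" for N
    by (intro holomorphic_intros hol)
  then have partial_hol: "(\<lambda>z. cinner v (F z (s N))) holomorphic_on S" for N
    by (rule holomorphic_transform) (simp add: bcl s_def bounded_clinear_sum bounded_clinear_scaleC
        cinner_sum_right cinner_scaleC_right)
  have lim: "uniform_limit (cball z0 R) (\<lambda>N z. cinner v (F z (s N))) (\<lambda>z. cinner v (F z y)) sequentially"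
    using R(2) M \<open>0 \<le> M\<close> \<open>s \<longlonglongrightarrow> y\<close> by (intro uniform_limit_cinner_apply bcl) auto
  have partial_disc: "continuous_on (cball z0 R) (\<lambda>z. cinner v (F z (s N)))
      \<and> (\<lambda>z. cinner v (F z (s N))) holomorphic_on ball z0 R" for N
    using holomorphic_on_subset[OF partial_hol R(2)]
    by (auto intro: holomorphic_on_imp_continuous_on holomorphic_on_subset[OF _ ball_subset_cball])
  obtain "(\<lambda>z. cinner v (F z y)) holomorphic_on ball z0 R"
    using holomorphic_uniform_limit[OF always_eventually[OF allI[OF partial_disc]] lim sequentially_bot]
    by blast
  then show "\<exists>f'. ((\<lambda>z. cinner v (F z y)) has_field_derivative f') (at z0)"
    using R(1) holomorphic_on_open[OF open_ball] by auto
qed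

lemma onorm_bounded_on_compact_if_vanalytic:
  fixes F :: "complex \<Rightarrow> 'x::chilbert \<Rightarrow> 'x"
  assumes bcl: "\<And>z. z \<in> S \<Longrightarrow> bounded_clinear (F z)"
    and an: "\<And>y. vanalytic_on (\<lambda>z. F z y) S"
    and K: "compact K" "K \<subseteq> S"
  shows "\<exists>M. \<forall>z\<in>K. onorm (F z) \<le> M"
proof (rule uniform_boundedness)
  show "bounded_linear (F z)" if "z \<in> K" for z
    using bcl K that bounded_clinear_imp_bounded_linear by blast
  show "\<exists>B. \<forall>z\<in>K. norm (F z y) \<le> B" for y
  proof -
    have "continuous_on K (\<lambda>z. F z y)"
      using vanalytic_on_imp_continuous_on an K continuous_on_subset by blast
    then have "bounded ((\<lambda>z. F z y) ` K)"
      using compact_continuous_image compact_imp_bounded K by blast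
    then show ?thesis
      by (auto simp: bounded_iff)
  qed
qed

lemma vanalytic_on_apply_of_basis:
  fixes F :: "complex \<Rightarrow> 'x::chilbert \<Rightarrow> 'x" and u :: "nat \<Rightarrow> 'x"
  assumes "open S" and bcl: "\<And>z. z \<in> S \<Longrightarrow> bounded_clinear (F z)"
    and onb: "orthonormal_basis u"
    and an: "\<And>n. vanalytic_on (\<lambda>z. F z (u n)) S"
    and bnd: "\<And>K. compact K \<Longrightarrow> K \<subseteq> S \<Longrightarrow> \<exists>M. \<forall>z\<in>K. onorm (F z) \<le> M"
  shows "vanalytic_on (\<lambda>z. F z y) S"
proof (rule weakly_holomorphic_imp_vanalytic[OF \<open>open S\<close>])
  show "(\<lambda>z. cinner v (F z y)) holomorphic_on S" for v
  proof (rule holomorphic_cinner_apply_of_basis[OF \<open>open S\<close> bcl onb])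
    show "(\<lambda>z. cinner v (F z (u n))) holomorphic_on S" for n
      by (rule vanalytic_on_imp_holomorphic_cinner[OF an])
  qed (auto intro: bnd)
  show "\<exists>B. \<forall>z\<in>K. norm (F z y) \<le> B" if K: "compact K" "K \<subseteq> S" for K
  proof -
    obtain M where M: "\<forall>z\<in>K. onorm (F z) \<le> M"
      using bnd[OF K] by blast
    have "norm (F z y) \<le> M * norm y" if "z \<in> K" for z
      using that K M by (intro bounded_clinear_norm_le bcl) auto
    then show ?thesis by blast
  qed
qed

theorem theorem3p2:
  fixes F :: "complex \<Rightarrow> 'x::chilbert \<Rightarrow> 'x"
    and \<Omega> :: "complex set"
    and u :: "nat \<Rightarrow> 'x"
  assumes "open \<Omega>" and "connected \<Omega>" and "\<Omega> \<noteq> {}"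
    and "\<forall>z\<in>\<Omega>. bounded_clinear (F z)"
    and "orthonormal_basis u"
  shows "(\<forall>f\<in>H_F F. vanalytic_on f \<Omega>) \<longleftrightarrow>
           ((\<forall>n. vanalytic_on (\<lambda>z. F z (u n)) \<Omega>) \<and>
            (\<forall>K. compact K \<and> K \<subseteq> \<Omega> \<longrightarrow> (\<exists>M. \<forall>z\<in>K. onorm (F z) \<le> M)))"
proof -
  have bcl: "\<And>z. z \<in> \<Omega> \<Longrightarrow> bounded_clinear (F z)"
    using assms(4) by blast
  have "(\<forall>f\<in>H_F F. vanalytic_on f \<Omega>) \<longleftrightarrow> (\<forall>y. vanalytic_on (\<lambda>z. F z y) \<Omega>)"
    by (auto simp: H_F_def)
  also have "\<dots> \<longleftrightarrow> ((\<forall>n. vanalytic_on (\<lambda>z. F z (u n)) \<Omega>) \<and>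
            (\<forall>K. compact K \<and> K \<subseteq> \<Omega> \<longrightarrow> (\<exists>M. \<forall>z\<in>K. onorm (F z) \<le> M)))"
  proof (intro iffI conjI allI impI)
    fix n
    assume "\<forall>y. vanalytic_on (\<lambda>z. F z y) \<Omega>"
    then show "vanalytic_on (\<lambda>z. F z (u n)) \<Omega>" by blast
  next
    fix K
    assume "\<forall>y. vanalytic_on (\<lambda>z. F z y) \<Omega>" and "compact K \<and> K \<subseteq> \<Omega>"
    then show "\<exists>M. \<forall>z\<in>K. onorm (F z) \<le> M"
      by (intro onorm_bounded_on_compact_if_vanalytic[OF bcl]) auto
  next
    fix y
    assume "(\<forall>n. vanalytic_on (\<lambda>z. F z (u n)) \<Omega>) \<and>
            (\<forall>K. compact K \<and> K \<subseteq> \<Omega> \<longrightarrow> (\<exists>M. \<forall>z\<in>K. onorm (F z) \<le> M))"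
    then have an: "\<And>n. vanalytic_on (\<lambda>z. F z (u n)) \<Omega>"
      and bnd: "\<And>K. compact K \<Longrightarrow> K \<subseteq> \<Omega> \<Longrightarrow> \<exists>M. \<forall>z\<in>K. onorm (F z) \<le> M"
      by simp_all
    show "vanalytic_on (\<lambda>z. F z y) \<Omega>"
      by (rule vanalytic_on_apply_of_basis[OF \<open>open \<Omega>\<close> bcl \<open>orthonormal_basis u\<close> an bnd])
  qed
  finally show ?thesis .
qed

end
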